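(* Let $q\in(0,1)$, let $\alpha,p,j\ge0$ be integers, and let $b_n=q^n[n+\alpha+1]_q+q^{n+\alpha}[n]_q$ and $\lambda_n=q^{2n+\alpha-1}[n]_q[n+\alpha]_q$. Then $$\sum_{\omega\in\mathrm{Mot}_{p,j,j}}\mathrm{wt}_{b,\lambda}(\omega)=\sum_{M\in M^{(\alpha)}_{p,j}(p)}q^{\mathrm{cr}(M)}.$$
   Context: $[n]_q=\frac{1-q^n}{1-q}$. Motzkin paths: a Motzkin path is a sequence $(s_0,\dots,s_n)$ of points $s_i=(x_i,y_i)\in\mathbb{Z}^2$ with all $y_i\ge0$ such that each step $(s_i,s_{i+1})$ is an East step ($+(1,0)$), a North-East step ($+(1,1)$) or a South-East step ($+(1,-1)$); the step has height $k$ if $y_i=k$. $\mathrm{Mot}_{n,k,l}$ is the set of Motzkin paths from $(0,k)$ to $(n,l)$. An East step of height $k$ has weight $b_k$, a North-East step weight $1$, a South-East step of height $k$ weight $\lambda_k$; $\mathrm{wt}_{b,\lambda}(\omega)$ is the product of the step weights. Bipartite matchings: for integers $n,j,\alpha\ge0$, let $T_-=\{-\alpha-j,\dots,-1\}$, $T_+=\{1,\dots,n\}$ (top row), $B_-=\{-\tilde j,\dots,-\tilde 1\}$, $B_+=\{\tilde1,\dots,\tilde n\}$ (bottom row; $\tilde m$ is a formal copy of the integer $m$, and bottom vertices are compared via these integers). A bipartite matching is a set partition of $T_-\cup T_+\cup B_-\cup B_+$ into singletons (isolated vertices) and blocks $\{a,\tilde b\}$ with $a$ top, $\tilde b$ bottom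 (edges, written $(a,\tilde b)$). $M^{(\alpha)}_{n,j}$ is the set of such matchings with no edge between $T_-$ and $B_-$; $M^{(\alpha)}_{n,j}(l)$ its subset with exactly $l$ edges. The crossing number $\mathrm{cr}(M)$ is the total number of: (C1) unordered pairs of edges $(a,\tilde b),(c,\tilde d)$ with $a<c$ and $d<b$; (C2) pairs of an edge $(a,\tilde b)$ and an isolated top vertex $c$ with $c<a$; (C3) pairs of an edge $(a,\tilde b)$ and an isolated bottom vertex $\tilde d$ with $d<b$. *)

theory Defs
  imports Complex_Main
begin

definition qint :: "real \<Rightarrow> nat \<Rightarrow> real" where
  "qint q n = (1 - q ^ n) / (1 - q)"

definition is_step :: "int \<times> int \<Rightarrow> int \<times> int \<Rightarrow> bool" where
  "is_step s t \<longleftrightarrow> t = (fst s + 1, snd s) \<or> t = (fst s + 1, snd s + 1) \<or> t = (fst s + 1, snd s - 1)"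

definition Mot :: "nat \<Rightarrow> nat \<Rightarrow> nat \<Rightarrow> (int \<times> int) list set" where
  "Mot n k l = {ss. length ss = n + 1 \<and> ss ! 0 = (0, int k) \<and> ss ! n = (int n, int l)
      \<and> (\<forall>i\<le>n. snd (ss ! i) \<ge> 0) \<and> (\<forall>i<n. is_step (ss ! i) (ss ! Suc i))}"

definition step_wt :: "(nat \<Rightarrow> real) \<Rightarrow> (nat \<Rightarrow> real) \<Rightarrow> int \<times> int \<Rightarrow> int \<times> int \<Rightarrow> real" where
  "step_wt b lam s t =
     (if snd t = snd s then b (nat (snd s))
      else if snd t = snd s + 1 then 1
      else lam (nat (snd s)))"

definition wt :: "(nat \<Rightarrow> real) \<Rightarrow> (nat \<Rightarrow> real) \<Rightarrow> (int \<times> int) list \<Rightarrow> real" where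
  "wt b lam ss = (\<Prod>i<length ss - 1. step_wt b lam (ss ! i) (ss ! Suc i))"

text \<open>A matching (set partition into
  singletons and top-bottom pairs) is encoded by its set of edges (a, b), a top,
  b bottom, with every vertex in at most one edge; the remaining vertices are the
  isolated ones.\<close>
definition top_verts :: "nat \<Rightarrow> nat \<Rightarrow> nat \<Rightarrow> int set" where
  "top_verts \<alpha> n j = {- int \<alpha> - int j .. -1} \<union> {1 .. int n}"

definition bot_verts :: "nat \<Rightarrow> nat \<Rightarrow> int set" where
  "bot_verts n j = {- int j .. -1} \<union> {1 .. int n}"

definition matchings :: "nat \<Rightarrow> nat \<Rightarrow> nat \<Rightarrow> (int \<times> int) set set" where
  "matchings \<alpha> n j = {E. E \<subseteq> top_verts \<alpha> n j \<times> bot_verts n j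
      \<and> (\<forall>a b b'. (a, b) \<in> E \<longrightarrow> (a, b') \<in> E \<longrightarrow> b = b')
      \<and> (\<forall>a a' b. (a, b) \<in> E \<longrightarrow> (a', b) \<in> E \<longrightarrow> a = a')
      \<and> (\<forall>(a, b)\<in>E. \<not> (a < 0 \<and> b < 0))}"

definition matchings_l :: "nat \<Rightarrow> nat \<Rightarrow> nat \<Rightarrow> nat \<Rightarrow> (int \<times> int) set set" where
  "matchings_l \<alpha> n j l = {E \<in> matchings \<alpha> n j. card E = l}"

definition iso_top :: "nat \<Rightarrow> nat \<Rightarrow> nat \<Rightarrow> (int \<times> int) set \<Rightarrow> int set" where
  "iso_top \<alpha> n j E = top_verts \<alpha> n j - fst ` E"

definition iso_bot :: "nat \<Rightarrow> nat \<Rightarrow> (int \<times> int) set \<Rightarrow> int set" where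
  "iso_bot n j E = bot_verts n j - snd ` E"

definition cr :: "nat \<Rightarrow> nat \<Rightarrow> nat \<Rightarrow> (int \<times> int) set \<Rightarrow> nat" where
  "cr \<alpha> n j E =
     card {(e, f). e \<in> E \<and> f \<in> E \<and> fst e < fst f \<and> snd f < snd e}
   + card {(e, c). e \<in> E \<and> c \<in> iso_top \<alpha> n j E \<and> c < fst e}
   + card {(e, d). e \<in> E \<and> d \<in> iso_bot n j E \<and> d < snd e}"

end

theory Submission
  imports Defs
begin

(* Both sides are evaluations of iterated transfer operators.  Summing wt over the Motzkin paths of
   length n from height k, each weighted by g of its final height, gives (J^n g) k for the Jacobi
   operator J g k = g (k+1) + b_k g k + lambda_k g (k-1).

   For matchings, weight each one by q^cr times a function of its numbers I and K of isolated top
   and bottom vertices, and grow the rows one vertex at a time, always to the right of everything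
   present.  A new vertex left isolated creates no crossing; a new vertex matched to the isolated
   vertex of rank r on the other row creates r crossings plus one for each isolated vertex on its
   own row.  Summing over r produces q-integers, and since I = K + alpha, adding a bottom and then a
   top vertex acts on functions of K exactly as J does.  Evaluating at the indicator of j selects
   the paths ending at height j and the matchings with j isolated bottom vertices, i.e. with p
   edges. *)

section \<open>q-integers and crossings\<close>

lemma qint_0 [simp]: "qint q 0 = 0"
  by (simp add: qint_def)

lemma qint_Suc: "q \<noteq> 1 \<Longrightarrow> qint q (Suc n) = qint q n + q ^ n"
  by (simp add: qint_def field_simps)

lemma sum_power_rank_eq_qint:
  fixes S :: "'a :: linorder set"
  assumes "finite S" "q \<noteq> 1"
  shows "(\<Sum>x\<in>S. q ^ card {y\<in>S. y < x}) = qint q (card S)"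
  using assms(1)
proof (induction S rule: finite_linorder_max_induct)
  case empty
  then show ?case
    by simp
next
  case (insert m S)
  have m: "m \<notin> S" and "{y\<in>insert m S. y < m} = S"
    and "\<And>x. x \<in> S \<Longrightarrow> {y\<in>insert m S. y < x} = {y\<in>S. y < x}"
    using insert.hyps by auto
  then have "(\<Sum>x\<in>insert m S. q ^ card {y\<in>insert m S. y < x})
      = q ^ card S + (\<Sum>x\<in>S. q ^ card {y\<in>S. y < x})"
    using insert.hyps by simp
  with insert m assms(2) show ?case
    by (simp add: qint_Suc)
qed

text \<open>The crossing number with the sets \<open>T\<close>, \<open>B\<close> of isolated top and bottom vertices as
  parameters, so that it can be updated one vertex at a time.\<close>

definition crossings :: "(int \<times> int) set \<Rightarrow> int set \<Rightarrow> int set \<Rightarrow> nat" where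
  "crossings E T B =
     card {(e, f). e \<in> E \<and> f \<in> E \<and> fst e < fst f \<and> snd f < snd e}
   + card {(e, c). e \<in> E \<and> c \<in> T \<and> c < fst e}
   + card {(e, d). e \<in> E \<and> d \<in> B \<and> d < snd e}"

lemma cr_eq_crossings: "cr \<alpha> n j E = crossings E (iso_top \<alpha> n j E) (iso_bot n j E)"
  by (simp add: cr_def crossings_def)

lemma card_pairs_eq_sum:
  assumes "finite A" "finite B"
  shows "card {(x, y). x \<in> A \<and> y \<in> B \<and> P x y} = (\<Sum>x\<in>A. card {y\<in>B. P x y})"
proof -
  have "{(x, y). x \<in> A \<and> y \<in> B \<and> P x y} = Sigma A (\<lambda>x. {y\<in>B. P x y})"
    by auto
  with assms show ?thesis
    by simp
qed

lemma crossings_eq_sum: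
  assumes "finite E" "finite T" "finite B"
  shows "crossings E T B = (\<Sum>e\<in>E. card {f\<in>E. fst e < fst f \<and> snd f < snd e}
     + card {c\<in>T. c < fst e} + card {d\<in>B. d < snd e})"
  using assms unfolding crossings_def
  by (simp add: card_pairs_eq_sum[where P = "\<lambda>e f. fst e < fst f \<and> snd f < snd e"]
      card_pairs_eq_sum[where P = "\<lambda>e c. c < fst e"] card_pairs_eq_sum[where P = "\<lambda>e d. d < snd e"]
      sum.distrib)

lemma crossings_swap: "crossings (prod.swap ` E) B T = crossings E T B"
proof -
  have "{(e, f). e \<in> prod.swap ` E \<and> f \<in> prod.swap ` E \<and> fst e < fst f \<and> snd f < snd e}
      = (\<lambda>(e, f). (prod.swap f, prod.swap e)) ` {(e, f). e \<in> E \<and> f \<in> E \<and> fst e < fst f \<and> snd f < snd e}"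
    by force
  moreover have "{(e, c). e \<in> prod.swap ` E \<and> c \<in> B \<and> c < fst e}
      = (\<lambda>(e, c). (prod.swap e, c)) ` {(e, d). e \<in> E \<and> d \<in> B \<and> d < snd e}"
    by force
  moreover have "{(e, d). e \<in> prod.swap ` E \<and> d \<in> T \<and> d < snd e}
      = (\<lambda>(e, c). (prod.swap e, c)) ` {(e, c). e \<in> E \<and> c \<in> T \<and> c < fst e}"
    by force
  ultimately show ?thesis
    unfolding crossings_def by (simp add: card_image inj_on_def)
qed

lemma crossings_insert_isolated_top:
  assumes "finite E" "finite T" "finite B" "t \<notin> T" "\<forall>e\<in>E. fst e \<le> t"
  shows "crossings E (insert t T) B = crossings E T B"
proof -
  have "{c \<in> insert t T. c < fst e} = {c\<in>T. c < fst e}" if "e \<in> E" for e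
    using assms(5) that by auto
  with assms show ?thesis
    by (simp add: crossings_eq_sum)
qed

lemma card_insert_Collect:
  assumes "finite A" "x \<notin> A"
  shows "card {y \<in> insert x A. P y} = card {y\<in>A. P y} + of_bool (P x)"
proof -
  have "{y \<in> insert x A. P y} = (if P x then insert x {y\<in>A. P y} else {y\<in>A. P y})"
    by auto
  with assms show ?thesis
    by simp
qed

text \<open>Each old edge \<open>e\<close> gains the crossing with \<open>(t, b)\<close> exactly when it loses the
  isolated vertex \<open>b\<close> below its bottom end, so only the new edge contributes.\<close>

lemma crossings_insert_edge_top:
  assumes fin: "finite E" "finite T" "finite B"
    and b: "b \<in> B" and t_max: "\<forall>e\<in>E. fst e < t" "\<forall>c\<in>T. c < t"
  shows "crossings (insert (t, b) E) T (B - {b}) = crossings E T B + card {d\<in>B. d < b} + card T"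
proof -
  have tE: "(t, b) \<notin> E"
    using t_max by auto
  have old: "card {f\<in>insert (t, b) E. fst e < fst f \<and> snd f < snd e}
        + card {c\<in>T. c < fst e} + card {d\<in>B - {b}. d < snd e}
      = card {f\<in>E. fst e < fst f \<and> snd f < snd e} + card {c\<in>T. c < fst e} + card {d\<in>B. d < snd e}"
    if "e \<in> E" for e
  proof -
    have "card {d\<in>B. d < snd e} = card {d\<in>B - {b}. d < snd e} + of_bool (b < snd e)"
      using card_insert_Collect[of "B - {b}" b "\<lambda>d. d < snd e"] b fin by (simp add: insert_absorb)
    then show ?thesis
      using card_insert_Collect[of E "(t, b)" "\<lambda>f. fst e < fst f \<and> snd f < snd e"] fin tE t_max that
      by simp
  qed
  have new: "card {f\<in>insert (t, b) E. t < fst f \<and> snd f < b} + card {c\<in>T. c < t}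
      + card {d\<in>B - {b}. d < b} = card {d\<in>B. d < b} + card T"
  proof -
    have "{f\<in>insert (t, b) E. t < fst f \<and> snd f < b} = {}" "{c\<in>T. c < t} = T"
      "{d\<in>B - {b}. d < b} = {d\<in>B. d < b}"
      using t_max by force+
    then show ?thesis
      by (simp only: card.empty add_0)
  qed
  have "(\<Sum>e\<in>E. card {f\<in>insert (t, b) E. fst e < fst f \<and> snd f < snd e}
        + card {c\<in>T. c < fst e} + card {d\<in>B - {b}. d < snd e})
      = (\<Sum>e\<in>E. card {f\<in>E. fst e < fst f \<and> snd f < snd e} + card {c\<in>T. c < fst e} + card {d\<in>B. d < snd e})"
    by (rule sum.cong[OF refl old])
  then show ?thesis
    using fin
    unfolding crossings_eq_sum[OF finite_insert[THEN iffD2, OF fin(1)] fin(2) finite_Diff[OF fin(3)]]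
      crossings_eq_sum[OF fin] sum.insert[OF fin(1) tE] fst_conv snd_conv new
    by linarith
qed

section \<open>Matchings between growing rows\<close>

definition matchings_on :: "int set \<Rightarrow> int set \<Rightarrow> (int \<times> int) set set" where
  "matchings_on T B =
     {E. E \<subseteq> T \<times> B \<and> inj_on fst E \<and> inj_on snd E \<and> (\<forall>(a, b)\<in>E. \<not> (a < 0 \<and> b < 0))}"

lemma matchings_eq_matchings_on: "matchings \<alpha> n j = matchings_on (top_verts \<alpha> n j) (bot_verts n j)"
  unfolding matchings_def matchings_on_def inj_on_def by fastforce

lemma finite_matchings_on: "finite T \<Longrightarrow> finite B \<Longrightarrow> finite (matchings_on T B)"
  by (rule finite_subset[of _ "Pow (T \<times> B)"]) (auto simp: matchings_on_def)

lemma card_isolated_top: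
  assumes "M \<in> matchings_on T B" "finite T"
  shows "card (T - fst ` M) + card M = card T"
proof -
  have "fst ` M \<subseteq> T" "inj_on fst M"
    using assms(1) by (auto simp: matchings_on_def)
  with assms(2) show ?thesis
    by (metis card_Diff_subset card_image card_mono finite_subset le_add_diff_inverse2)
qed

lemma card_isolated_bot:
  assumes "M \<in> matchings_on T B" "finite B"
  shows "card (B - snd ` M) + card M = card B"
proof -
  have "snd ` M \<subseteq> B" "inj_on snd M"
    using assms(1) by (auto simp: matchings_on_def)
  with assms(2) show ?thesis
    by (metis card_Diff_subset card_image card_mono finite_subset le_add_diff_inverse2)
qed

lemma swap_in_matchings_on_iff: "prod.swap ` E \<in> matchings_on B T \<longleftrightarrow> E \<in> matchings_on T B"
proof -
  have "inj_on fst (prod.swap ` E) \<longleftrightarrow> inj_on snd E" "inj_on snd (prod.swap ` E) \<longleftrightarrow> inj_on fst E"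
    by (simp_all add: comp_inj_on_iff[OF inj_swap] comp_def)
  moreover have "prod.swap ` E \<subseteq> B \<times> T \<longleftrightarrow> E \<subseteq> T \<times> B"
    by auto
  ultimately show ?thesis
    unfolding matchings_on_def by auto
qed

lemma insert_edge_in_matchings_on:
  assumes M: "M \<in> matchings_on T B" and t: "t \<notin> T" "0 \<le> t" and b: "b \<in> B - snd ` M"
  shows "insert (t, b) M \<in> matchings_on (insert t T) B"
proof -
  have "t \<notin> fst ` M"
    using M t by (auto simp: matchings_on_def)
  with M t b show ?thesis
    by (auto simp: matchings_on_def)
qed

lemma remove_edge_in_matchings_on:
  assumes M: "M \<in> matchings_on (insert t T) B" and tb: "(t, b) \<in> M"
  shows "M - {(t, b)} \<in> matchings_on T B" "b \<in> B - snd ` (M - {(t, b)})"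
proof -
  have "fst e \<noteq> t" if "e \<in> M - {(t, b)}" for e
    using M tb that unfolding matchings_on_def inj_on_def by force
  then show "M - {(t, b)} \<in> matchings_on T B"
    using M by (force simp: matchings_on_def intro: inj_on_diff)
  show "b \<in> B - snd ` (M - {(t, b)})"
  proof
    show "b \<in> B"
      using M tb by (auto simp: matchings_on_def)
    show "b \<notin> snd ` (M - {(t, b)})"
    proof
      assume "b \<in> snd ` (M - {(t, b)})"
      then obtain a where "(a, b) \<in> M" "(a, b) \<noteq> (t, b)"
        by force
      with M tb show False
        by (auto simp: matchings_on_def dest: inj_onD[of snd M "(a, b)" "(t, b)"])
    qed
  qed
qed

lemma matchings_on_insert_top:
  assumes "t \<notin> T" "0 \<le> t"
  shows "matchings_on (insert t T) B
    = matchings_on T B \<union> (\<lambda>(M, b). insert (t, b) M) ` Sigma (matchings_on T B) (\<lambda>M. B - snd ` M)"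
proof (intro equalityI subsetI)
  fix M
  assume M: "M \<in> matchings_on (insert t T) B"
  show "M \<in> matchings_on T B \<union> (\<lambda>(M, b). insert (t, b) M) ` Sigma (matchings_on T B) (\<lambda>M. B - snd ` M)"
  proof (cases "t \<in> fst ` M")
    case False
    with M have "M \<in> matchings_on T B"
      by (force simp: matchings_on_def)
    then show ?thesis ..
  next
    case True
    then obtain b where tb: "(t, b) \<in> M"
      by force
    then have "M = insert (t, b) (M - {(t, b)})"
      by auto
    with remove_edge_in_matchings_on[OF M tb] show ?thesis
      by blast
  qed
next
  fix M
  assume "M \<in> matchings_on T B \<union> (\<lambda>(M, b). insert (t, b) M) ` Sigma (matchings_on T B) (\<lambda>M. B - snd ` M)"
  moreover have "matchings_on T B \<subseteq> matchings_on (insert t T) B"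
    by (auto simp: matchings_on_def)
  ultimately show "M \<in> matchings_on (insert t T) B"
    using insert_edge_in_matchings_on[OF _ assms] by auto
qed

lemma sum_matchings_on_insert_top:
  assumes "finite T" "finite B" "t \<notin> T" "0 \<le> t"
  shows "(\<Sum>M\<in>matchings_on (insert t T) B. G M)
    = (\<Sum>M\<in>matchings_on T B. G M + (\<Sum>b\<in>B - snd ` M. G (insert (t, b) M)))"
proof -
  let ?ext = "\<lambda>(M, b). insert (t, b) M"
  let ?S = "Sigma (matchings_on T B) (\<lambda>M. B - snd ` M)"
  have fin: "finite (matchings_on T B)" "finite ?S"
    using assms(1,2) finite_matchings_on by auto
  have sub: "M \<subseteq> T \<times> B" if "M \<in> matchings_on T B" for M
    using that by (simp add: matchings_on_def)
  have "inj_on ?ext ?S"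
  proof (rule inj_onI, clarify)
    fix M b M' b'
    assume "M \<in> matchings_on T B" "M' \<in> matchings_on T B" and eq: "insert (t, b) M = insert (t, b') M'"
    then have "(t, c) \<notin> M" "(t, c) \<notin> M'" for c
      using sub assms(3) by blast+
    with eq show "M = M' \<and> b = b'"
      by (metis insert_ident insert_iff prod.inject)
  qed
  moreover have "matchings_on T B \<inter> ?ext ` ?S = {}"
    using sub assms(3) by fastforce
  ultimately have "(\<Sum>M\<in>matchings_on (insert t T) B. G M)
      = (\<Sum>M\<in>matchings_on T B. G M) + (\<Sum>(M, b)\<in>?S. G (insert (t, b) M))"
    using fin
    by (simp add: matchings_on_insert_top[OF assms(3,4)] sum.union_disjoint sum.reindex case_prod_unfold)
  also have "\<dots> = (\<Sum>M\<in>matchings_on T B. G M + (\<Sum>b\<in>B - snd ` M. G (insert (t, b) M)))"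
    using fin assms(2) by (simp add: sum.Sigma sum.distrib)
  finally show ?thesis .
qed

section \<open>The weighted sum over matchings\<close>

definition matching_weight ::
    "real \<Rightarrow> int set \<Rightarrow> int set \<Rightarrow> (nat \<Rightarrow> nat \<Rightarrow> real) \<Rightarrow> (int \<times> int) set \<Rightarrow> real" where
  "matching_weight q T B f M =
     q ^ crossings M (T - fst ` M) (B - snd ` M) * f (card (T - fst ` M)) (card (B - snd ` M))"

definition matching_sum :: "real \<Rightarrow> int set \<Rightarrow> int set \<Rightarrow> (nat \<Rightarrow> nat \<Rightarrow> real) \<Rightarrow> real" where
  "matching_sum q T B f = (\<Sum>M\<in>matchings_on T B. matching_weight q T B f M)"

text \<open>The truncated \<open>K - 1\<close> and \<open>I - 1\<close> are harmless: at \<open>0\<close> they are multiplied by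
  \<open>qint q 0 = 0\<close>.\<close>

definition top_vertex_step :: "real \<Rightarrow> (nat \<Rightarrow> nat \<Rightarrow> real) \<Rightarrow> nat \<Rightarrow> nat \<Rightarrow> real" where
  "top_vertex_step q f I K = f (Suc I) K + q ^ I * qint q K * f I (K - 1)"

definition bot_vertex_step :: "real \<Rightarrow> (nat \<Rightarrow> nat \<Rightarrow> real) \<Rightarrow> nat \<Rightarrow> nat \<Rightarrow> real" where
  "bot_vertex_step q f I K = f I (Suc K) + q ^ K * qint q I * f (I - 1) K"

lemma matching_sum_swap: "matching_sum q B T f = matching_sum q T B (\<lambda>I K. f K I)"
proof -
  have "matchings_on B T = (`) prod.swap ` matchings_on T B"
    using swap_in_matchings_on_iff[of _ T B] swap_in_matchings_on_iff[of _ B T]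
    by (auto simp: image_image intro!: image_eqI[where x = "prod.swap ` _"])
  moreover have "inj_on ((`) prod.swap) (matchings_on T B)"
    by (simp add: inj_on_def inj_image_eq_iff)
  ultimately show ?thesis
    unfolding matching_sum_def matching_weight_def by (simp add: sum.reindex image_image crossings_swap)
qed

lemma matching_weight_extensions_top:
  assumes M: "M \<in> matchings_on T B" and fin: "finite T" "finite B" and t: "\<forall>c\<in>T. c < t"
    and q: "q \<noteq> 1"
  shows "matching_weight q (insert t T) B f M
      + (\<Sum>b\<in>B - snd ` M. matching_weight q (insert t T) B f (insert (t, b) M))
    = matching_weight q T B (top_vertex_step q f) M"
proof -
  define IT IB where "IT = T - fst ` M" and "IB = B - snd ` M"
  define c where "c = crossings M IT IB"
  have sub: "M \<subseteq> T \<times> B"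
    using M by (simp add: matchings_on_def)
  then have finM: "finite M" and below: "\<forall>e\<in>M. fst e < t"
    using fin t by (auto intro: finite_subset)
  have finI: "finite IT" "finite IB"
    using fin by (simp_all add: IT_def IB_def)
  have "t \<notin> IT"
    using t by (auto simp: IT_def)
  have "insert t T - fst ` M = insert t IT"
    using sub t by (auto simp: IT_def)
  moreover have "crossings M (insert t IT) IB = c"
    using crossings_insert_isolated_top[OF finM finI \<open>t \<notin> IT\<close>] below by (simp add: c_def less_imp_le)
  moreover have "matching_weight q (insert t T) B f (insert (t, b) M)
      = q ^ c * q ^ card IT * f (card IT) (card IB - 1) * q ^ card {d\<in>IB. d < b}"
    if b: "b \<in> IB" for b
  proof -
    have "insert t T - fst ` insert (t, b) M = IT" "B - snd ` insert (t, b) M = IB - {b}"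
      using sub t by (auto simp: IT_def IB_def)
    moreover have "crossings (insert (t, b) M) IT (IB - {b}) = c + card {d\<in>IB. d < b} + card IT"
      using crossings_insert_edge_top[OF finM finI b below] t by (simp add: c_def IT_def)
    ultimately show ?thesis
      using b finI by (simp add: matching_weight_def power_add)
  qed
  ultimately show ?thesis
    using finI \<open>t \<notin> IT\<close> q
    by (simp add: matching_weight_def top_vertex_step_def IT_def[symmetric] IB_def[symmetric]
        c_def[symmetric] sum_distrib_left[symmetric] sum_power_rank_eq_qint algebra_simps)
qed

lemma matching_sum_insert_top:
  assumes "finite T" "finite B" "\<forall>c\<in>T. c < t" "0 \<le> t" "q \<noteq> 1"
  shows "matching_sum q (insert t T) B f = matching_sum q T B (top_vertex_step q f)"
proof -
  have "t \<notin> T"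
    using assms(3) by auto
  with assms show ?thesis
    unfolding matching_sum_def by (simp add: sum_matchings_on_insert_top matching_weight_extensions_top)
qed

lemma matching_sum_insert_bot:
  assumes "finite T" "finite B" "\<forall>d\<in>B. d < s" "0 \<le> s" "q \<noteq> 1"
  shows "matching_sum q T (insert s B) f = matching_sum q T B (bot_vertex_step q f)"
proof -
  have "matching_sum q T (insert s B) f = matching_sum q (insert s B) T (\<lambda>I K. f K I)"
    by (rule matching_sum_swap)
  also have "\<dots> = matching_sum q B T (top_vertex_step q (\<lambda>I K. f K I))"
    using assms by (simp add: matching_sum_insert_top)
  also have "\<dots> = matching_sum q T B (bot_vertex_step q f)"
    by (subst matching_sum_swap, rule arg_cong[where f = "matching_sum q T B"])
      (simp add: fun_eq_iff top_vertex_step_def bot_vertex_step_def)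
  finally show ?thesis .
qed

section \<open>Motzkin paths\<close>

definition motzkin_transfer :: "(nat \<Rightarrow> real) \<Rightarrow> (nat \<Rightarrow> real) \<Rightarrow> (nat \<Rightarrow> real) \<Rightarrow> nat \<Rightarrow> real" where
  "motzkin_transfer b lam g k = g (Suc k) + b k * g k + (if 0 < k then lam k * g (k - 1) else 0)"

definition adjacent_heights :: "nat \<Rightarrow> nat set" where
  "adjacent_heights l = {Suc l, l} \<union> (if 0 < l then {l - 1} else {})"

definition Mot_from :: "nat \<Rightarrow> nat \<Rightarrow> (int \<times> int) list set" where
  "Mot_from n k = (\<Union>l. Mot n k l)"

definition end_height :: "(int \<times> int) list \<Rightarrow> nat" where
  "end_height ss = nat (snd (last ss))"

lemma Mot_fst:
  assumes "ss \<in> Mot n k l" "i \<le> n"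
  shows "fst (ss ! i) = int i"
  using assms(2)
proof (induction i)
  case 0
  then show ?case
    using assms(1) by (simp add: Mot_def)
next
  case (Suc i)
  then have "is_step (ss ! i) (ss ! Suc i)"
    using assms(1) by (simp add: Mot_def)
  with Suc show ?case
    by (auto simp: is_step_def)
qed

lemma Mot_last:
  assumes "ss \<in> Mot n k l"
  shows "last ss = (int n, int l)"
proof -
  have "length ss = Suc n" "ss ! n = (int n, int l)"
    using assms by (auto simp: Mot_def)
  then show ?thesis
    by (subst last_conv_nth) auto
qed

lemma end_height_Mot: "ss \<in> Mot n k l \<Longrightarrow> end_height ss = l"
  by (simp add: Mot_last end_height_def)

lemma Mot_eq_end_height: "Mot n k l = {ss \<in> Mot_from n k. end_height ss = l}"
proof (intro equalityI subsetI)
  fix ss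
  assume "ss \<in> {ss \<in> Mot_from n k. end_height ss = l}"
  then obtain l' where "ss \<in> Mot n k l'" "end_height ss = l"
    by (auto simp: Mot_from_def)
  then show "ss \<in> Mot n k l"
    using end_height_Mot by metis
qed (auto simp: Mot_from_def end_height_Mot)

lemma Mot_0: "Mot 0 k l = (if l = k then {[(0, int k)]} else {})"
  by (auto simp: Mot_def length_Suc_conv)

lemma snoc_in_Mot:
  assumes ss: "ss \<in> Mot n k l" and l': "l' \<in> adjacent_heights l"
  shows "ss @ [(int (Suc n), int l')] \<in> Mot (Suc n) k l'"
proof -
  have len: "length ss = Suc n" and last: "ss ! n = (int n, int l)"
    using ss by (simp_all add: Mot_def)
  have "is_step (ss ! n) (int (Suc n), int l')"
    using l' by (auto simp: last is_step_def adjacent_heights_def split: if_splits)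
  with ss len show ?thesis
    by (auto simp: Mot_def nth_append less_Suc_eq le_Suc_eq)
qed

lemma Mot_Suc_butlast:
  assumes ss: "ss \<in> Mot (Suc n) k l'"
  obtains l where "butlast ss \<in> Mot n k l" "l' \<in> adjacent_heights l"
    "ss = butlast ss @ [(int (Suc n), int l')]"
proof -
  define l where "l = nat (snd (ss ! n))"
  have len: "length ss = Suc (Suc n)" and last: "ss ! Suc n = (int (Suc n), int l')"
    and step: "is_step (ss ! n) (ss ! Suc n)"
    using ss unfolding Mot_def by auto
  have sn: "ss ! n = (int n, int l)"
    using Mot_fst[OF ss, of n] ss by (simp add: l_def Mot_def prod_eq_iff)
  have "butlast ss \<in> Mot n k l"
    using ss len sn by (auto simp: Mot_def nth_butlast)
  moreover have "l' \<in> adjacent_heights l"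
    using step sn last by (auto simp: is_step_def adjacent_heights_def)
  moreover have "ss = butlast ss @ [(int (Suc n), int l')]"
    using len last by (metis append_butlast_last_id diff_Suc_1 last_conv_nth list.size(3) nat.distinct(1))
  ultimately show ?thesis
    using that by blast
qed

lemma Mot_from_Suc:
  "Mot_from (Suc n) k
    = (\<lambda>(ss, l'). ss @ [(int (Suc n), int l')]) ` Sigma (Mot_from n k) (\<lambda>ss. adjacent_heights (end_height ss))"
proof (intro equalityI subsetI)
  fix ss
  assume "ss \<in> Mot_from (Suc n) k"
  then obtain l' where "ss \<in> Mot (Suc n) k l'"
    by (auto simp: Mot_from_def)
  then obtain l where "butlast ss \<in> Mot n k l" "l' \<in> adjacent_heights l"
    "ss = butlast ss @ [(int (Suc n), int l')]"
    by (rule Mot_Suc_butlast)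
  then show "ss \<in> (\<lambda>(ss, l'). ss @ [(int (Suc n), int l')])
      ` Sigma (Mot_from n k) (\<lambda>ss. adjacent_heights (end_height ss))"
    by (auto simp: Mot_from_def end_height_Mot intro!: image_eqI[where x = "(butlast ss, l')"])
next
  fix ss
  assume "ss \<in> (\<lambda>(ss, l'). ss @ [(int (Suc n), int l')])
      ` Sigma (Mot_from n k) (\<lambda>ss. adjacent_heights (end_height ss))"
  then obtain ss0 l l' where "ss0 \<in> Mot n k l" "l' \<in> adjacent_heights l" "ss = ss0 @ [(int (Suc n), int l')]"
    by (auto simp: Mot_from_def end_height_Mot)
  then have "ss \<in> Mot (Suc n) k l'"
    using snoc_in_Mot by blast
  then show "ss \<in> Mot_from (Suc n) k"
    by (auto simp: Mot_from_def)
qed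

lemma finite_Mot_from: "finite (Mot_from n k)"
proof (induction n)
  case 0
  then show ?case
    by (simp add: Mot_from_def Mot_0)
next
  case (Suc n)
  then show ?case
    by (simp add: Mot_from_Suc adjacent_heights_def)
qed

lemma wt_snoc:
  assumes "ss \<noteq> []"
  shows "wt b lam (ss @ [t]) = wt b lam ss * step_wt b lam (last ss) t"
proof -
  obtain m where m: "length ss = Suc m"
    using assms by (cases ss) auto
  then have "wt b lam (ss @ [t]) = (\<Prod>i<m. step_wt b lam (ss ! i) (ss ! Suc i)) * step_wt b lam (ss ! m) t"
    by (simp add: wt_def nth_append)
  with m assms show ?thesis
    by (simp add: wt_def last_conv_nth)
qed

lemma sum_Mot_from_Suc:
  "(\<Sum>ss\<in>Mot_from (Suc n) k. wt b lam ss * g (end_height ss))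
    = (\<Sum>ss\<in>Mot_from n k. wt b lam ss * motzkin_transfer b lam g (end_height ss))"
proof -
  let ?snoc = "\<lambda>(ss, l'). ss @ [(int (Suc n), int l')]"
  let ?S = "Sigma (Mot_from n k) (\<lambda>ss. adjacent_heights (end_height ss))"
  have "inj_on ?snoc ?S"
    by (auto simp: inj_on_def)
  then have "(\<Sum>ss\<in>Mot_from (Suc n) k. wt b lam ss * g (end_height ss))
      = (\<Sum>(ss, l')\<in>?S. wt b lam (ss @ [(int (Suc n), int l')]) * g l')"
    by (simp add: Mot_from_Suc sum.reindex case_prod_unfold end_height_def)
  also have "\<dots> = (\<Sum>ss\<in>Mot_from n k. \<Sum>l'\<in>adjacent_heights (end_height ss).
      wt b lam ss * (step_wt b lam (int n, int (end_height ss)) (int (Suc n), int l') * g l'))"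
  proof -
    have "last ss = (int n, int (end_height ss))" "ss \<noteq> []" if "ss \<in> Mot_from n k" for ss
      using that by (auto simp: Mot_from_def Mot_last end_height_Mot Mot_def)
    then show ?thesis
      by (simp add: sum.Sigma[symmetric] finite_Mot_from adjacent_heights_def wt_snoc mult.assoc
          cong: sum.cong)
  qed
  also have "\<dots> = (\<Sum>ss\<in>Mot_from n k. wt b lam ss * motzkin_transfer b lam g (end_height ss))"
  proof -
    have "(\<Sum>l'\<in>adjacent_heights h. step_wt b lam (int n, int h) (int (Suc n), int l') * g l')
        = motzkin_transfer b lam g h" for h
      by (cases h) (auto simp: adjacent_heights_def step_wt_def motzkin_transfer_def nat_add_distrib)
    then show ?thesis
      by (simp add: sum_distrib_left[symmetric])
  qed
  finally show ?thesis .
qed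

lemma sum_Mot_from_eq_motzkin_transfer:
  "(\<Sum>ss\<in>Mot_from n k. wt b lam ss * g (end_height ss)) = (motzkin_transfer b lam ^^ n) g k"
proof (induction n arbitrary: g)
  case 0
  have "Mot_from 0 k = {[(0, int k)]}"
    by (auto simp: Mot_from_def Mot_0 split: if_splits)
  then show ?case
    by (simp add: wt_def end_height_def)
next
  case (Suc n)
  then show ?case
    by (simp add: sum_Mot_from_Suc funpow_Suc_right del: funpow.simps)
qed

lemma sum_Mot_from_end_height:
  fixes h :: "(int \<times> int) list \<Rightarrow> 'a :: comm_semiring_1"
  shows "(\<Sum>ss\<in>Mot_from n k. h ss * of_bool (end_height ss = l)) = (\<Sum>ss\<in>Mot n k l. h ss)"
  unfolding Mot_eq_end_height sum.inter_filter[OF finite_Mot_from] by (intro sum.cong) auto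

lemma top_verts_Suc: "top_verts \<alpha> (Suc n) j = insert (int (Suc n)) (top_verts \<alpha> n j)"
  by (auto simp: top_verts_def)

lemma bot_verts_Suc: "bot_verts (Suc n) j = insert (int (Suc n)) (bot_verts n j)"
  by (auto simp: bot_verts_def)

lemma card_top_verts: "card (top_verts \<alpha> n j) = \<alpha> + j + n"
  unfolding top_verts_def by (subst card_Un_disjoint) auto

lemma card_bot_verts: "card (bot_verts n j) = j + n"
  unfolding bot_verts_def by (subst card_Un_disjoint) auto

lemma finite_matchings: "finite (matchings \<alpha> n j)"
  by (simp add: matchings_eq_matchings_on finite_matchings_on top_verts_def bot_verts_def)

lemma matchings_0: "matchings \<alpha> 0 j = {{}}"
proof -
  have "E = {}" if "E \<in> matchings \<alpha> 0 j" for E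
  proof -
    have "E \<subseteq> top_verts \<alpha> 0 j \<times> bot_verts 0 j" "\<forall>(a, b)\<in>E. \<not> (a < 0 \<and> b < 0)"
      using that by (auto simp: matchings_def)
    then show ?thesis
      by (force simp: top_verts_def bot_verts_def)
  qed
  then show ?thesis
    by (auto simp: matchings_def)
qed

lemma card_iso_top:
  assumes "M \<in> matchings \<alpha> n j"
  shows "card (iso_top \<alpha> n j M) = card (iso_bot n j M) + \<alpha>"
proof -
  have "M \<in> matchings_on (top_verts \<alpha> n j) (bot_verts n j)"
    using assms by (simp add: matchings_eq_matchings_on)
  then have "card (iso_top \<alpha> n j M) + card M = \<alpha> + j + n" "card (iso_bot n j M) + card M = j + n"
    using card_isolated_top card_isolated_bot card_top_verts card_bot_verts
    by (auto simp: iso_top_def iso_bot_def top_verts_def bot_verts_def)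
  then show ?thesis
    by linarith
qed

lemma card_iso_bot_eq_iff:
  assumes "M \<in> matchings \<alpha> n j"
  shows "card (iso_bot n j M) = j \<longleftrightarrow> card M = n"
proof -
  have "M \<in> matchings_on (top_verts \<alpha> n j) (bot_verts n j)"
    using assms by (simp add: matchings_eq_matchings_on)
  then have "card (iso_bot n j M) + card M = j + n"
    using card_isolated_bot card_bot_verts by (auto simp: iso_bot_def bot_verts_def)
  then show ?thesis
    by linarith
qed

lemma sum_matchings_iso_bot_eq_matchings_l:
  fixes h :: "(int \<times> int) set \<Rightarrow> 'a :: comm_semiring_1"
  shows "(\<Sum>M\<in>matchings \<alpha> n j. h M * of_bool (card (iso_bot n j M) = j)) = (\<Sum>M\<in>matchings_l \<alpha> n j n. h M)"
proof -
  have "(\<Sum>M\<in>matchings \<alpha> n j. h M * of_bool (card (iso_bot n j M) = j))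
      = (\<Sum>M\<in>matchings \<alpha> n j. of_bool (card M = n) * h M)"
    by (intro sum.cong) (auto simp: card_iso_bot_eq_iff)
  with finite_matchings show ?thesis
    by (simp add: matchings_l_def Collect_conj_eq)
qed

lemma matching_sum_top_bot_verts:
  "matching_sum q (top_verts \<alpha> n j) (bot_verts n j) f
    = (\<Sum>M\<in>matchings \<alpha> n j. q ^ cr \<alpha> n j M * f (card (iso_top \<alpha> n j M)) (card (iso_bot n j M)))"
  by (simp add: matching_sum_def matching_weight_def matchings_eq_matchings_on cr_eq_crossings
      iso_top_def iso_bot_def)

lemma vertex_steps_eq_motzkin_transfer:
  assumes q: "q \<noteq> 1"
    and b: "\<And>n. b n = q ^ n * qint q (n + \<alpha> + 1) + q ^ (n + \<alpha>) * qint q n"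
    and lam: "\<And>n. lam n = q ^ (2 * n + \<alpha> - 1) * qint q n * qint q (n + \<alpha>)"
  shows "top_vertex_step q (bot_vertex_step q (\<lambda>I K. g K)) (k + \<alpha>) k = motzkin_transfer b lam g k"
proof (cases "k = 0")
  case True
  then show ?thesis
    by (simp add: top_vertex_step_def bot_vertex_step_def motzkin_transfer_def b)
next
  case False
  then have "k + \<alpha> + (k - 1) = 2 * k + \<alpha> - 1"
    by simp
  then have "q ^ (k + \<alpha>) * q ^ (k - 1) = q ^ (2 * k + \<alpha> - 1)"
    by (metis power_add)
  with False show ?thesis
    by (simp add: top_vertex_step_def bot_vertex_step_def motzkin_transfer_def b lam algebra_simps)
qed

lemma sum_matchings_eq_motzkin_transfer:
  assumes q: "q \<noteq> 1"
    and b: "\<And>n. b n = q ^ n * qint q (n + \<alpha> + 1) + q ^ (n + \<alpha>) * qint q n"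
    and lam: "\<And>n. lam n = q ^ (2 * n + \<alpha> - 1) * qint q n * qint q (n + \<alpha>)"
  shows "(\<Sum>M\<in>matchings \<alpha> n j. q ^ cr \<alpha> n j M * g (card (iso_bot n j M)))
    = (motzkin_transfer b lam ^^ n) g j"
proof (induction n arbitrary: g)
  case 0
  then show ?case
    by (simp add: matchings_0 cr_def iso_bot_def card_bot_verts)
next
  case (Suc n)
  let ?N = "int (Suc n)" and ?T = "top_verts \<alpha> n j" and ?B = "bot_verts n j"
  have below: "\<forall>c\<in>?T. c < ?N" "\<forall>d\<in>?B. d < ?N" and fin: "finite ?T" "finite ?B"
    by (auto simp: top_verts_def bot_verts_def)
  have "(\<Sum>M\<in>matchings \<alpha> (Suc n) j. q ^ cr \<alpha> (Suc n) j M * g (card (iso_bot (Suc n) j M)))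
      = matching_sum q (insert ?N ?T) (insert ?N ?B) (\<lambda>I K. g K)"
    unfolding top_verts_Suc[symmetric] bot_verts_Suc[symmetric] matching_sum_top_bot_verts ..
  also have "\<dots> = matching_sum q ?T ?B (top_vertex_step q (bot_vertex_step q (\<lambda>I K. g K)))"
    using fin below q by (simp add: matching_sum_insert_bot matching_sum_insert_top)
  also have "\<dots> = (\<Sum>M\<in>matchings \<alpha> n j. q ^ cr \<alpha> n j M * motzkin_transfer b lam g (card (iso_bot n j M)))"
    unfolding matching_sum_top_bot_verts
    by (intro sum.cong refl) (simp add: card_iso_top vertex_steps_eq_motzkin_transfer[OF q b lam])
  also have "\<dots> = (motzkin_transfer b lam ^^ Suc n) g j"
    by (simp add: Suc.IH funpow_Suc_right del: funpow.simps)
  finally show ?case .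
qed

theorem proposition2p4:
  fixes q :: real and \<alpha> p j :: nat and b lam :: "nat \<Rightarrow> real"
  assumes "0 < q" "q < 1"
    and "\<And>n. b n = q ^ n * qint q (n + \<alpha> + 1) + q ^ (n + \<alpha>) * qint q n"
    and "\<And>n. lam n = q ^ (2 * n + \<alpha> - 1) * qint q n * qint q (n + \<alpha>)"
  shows "(\<Sum>\<omega>\<in>Mot p j j. wt b lam \<omega>) = (\<Sum>M\<in>matchings_l \<alpha> p j p. q ^ cr \<alpha> p j M)"
proof -
  have q: "q \<noteq> 1"
    using assms(2) by simp
  let ?at_j = "\<lambda>k. of_bool (k = j) :: real"
  have "(\<Sum>\<omega>\<in>Mot p j j. wt b lam \<omega>) = (\<Sum>ss\<in>Mot_from p j. wt b lam ss * ?at_j (end_height ss))"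
    by (rule sum_Mot_from_end_height[symmetric])
  also have "\<dots> = (motzkin_transfer b lam ^^ p) ?at_j j"
    by (rule sum_Mot_from_eq_motzkin_transfer)
  also have "\<dots> = (\<Sum>M\<in>matchings \<alpha> p j. q ^ cr \<alpha> p j M * ?at_j (card (iso_bot p j M)))"
    by (rule sum_matchings_eq_motzkin_transfer[OF q assms(3,4), symmetric])
  also have "\<dots> = (\<Sum>M\<in>matchings_l \<alpha> p j p. q ^ cr \<alpha> p j M)"
    by (rule sum_matchings_iso_bot_eq_matchings_l)
  finally show ?thesis .
qed

end
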